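(* Assume the standing setting. Then every vertex of $G$ is incident with at most one nonremovable edge of type I and with at most two nonremovable edges of type II.
   Context: Graphs may have multiple edges but no loops. An edge is admissible if it lies in some perfect matching; a connected graph with at least two vertices is matching covered if every edge is admissible; an edge $e$ of a matching covered graph $G$ is removable if $G-e$ is matching covered, and nonremovable otherwise. A brick is a 3-connected nonbipartite graph $G$ such that $G-x-y$ has a perfect matching for all distinct $x,y$. A nonbipartite matching covered graph $G$ is near-bipartite if it has a pair of edges $\{e_1,e_2\}$ (a removable doubleton) such that $G-\{e_1,e_2\}$ is bipartite matching covered. Standing setting: $G$ is a near-bipartite brick with removable doubleton $\{e_1,e_2\}$, $H=G-\{e_1,e_2\}$, and $(U,W)$ is the bipartition of $H$, labelled so that both ends of $e_1$ lie in $U$ and both ends of $e_2$ lie in $W$. A nonremovable edge $e\notin\{e_1,e_2\}$ of $G$ is of type I if $e$ is removable in $H$, and of type II if $e$ is nonremovable in $H$. *)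

theory Defs
  imports Main
begin

text \<open>Parallel edges are distinct identifiers with the same ends.\<close>

definition is_graph :: "'v set \<Rightarrow> 'e set \<Rightarrow> ('e \<Rightarrow> 'v set) \<Rightarrow> bool" where
  "is_graph V E ends \<longleftrightarrow> finite V \<and> finite E \<and>
     (\<forall>e\<in>E. ends e \<subseteq> V \<and> card (ends e) = 2)"

definition perfect_matching :: "'v set \<Rightarrow> 'e set \<Rightarrow> ('e \<Rightarrow> 'v set) \<Rightarrow> 'e set \<Rightarrow> bool" where
  "perfect_matching V E ends M \<longleftrightarrow> M \<subseteq> E \<and> (\<forall>v\<in>V. \<exists>!e. e \<in> M \<and> v \<in> ends e)"

definition admissible :: "'v set \<Rightarrow> 'e set \<Rightarrow> ('e \<Rightarrow> 'v set) \<Rightarrow> 'e \<Rightarrow> bool" where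
  "admissible V E ends e \<longleftrightarrow> (\<exists>M. perfect_matching V E ends M \<and> e \<in> M)"

definition adj_rel :: "'e set \<Rightarrow> ('e \<Rightarrow> 'v set) \<Rightarrow> ('v \<times> 'v) set" where
  "adj_rel E ends = {(u, v). \<exists>e\<in>E. ends e = {u, v}}"

definition connected_graph :: "'v set \<Rightarrow> 'e set \<Rightarrow> ('e \<Rightarrow> 'v set) \<Rightarrow> bool" where
  "connected_graph V E ends \<longleftrightarrow> (\<forall>u\<in>V. \<forall>v\<in>V. (u, v) \<in> (adj_rel E ends)\<^sup>*)"

definition matching_covered :: "'v set \<Rightarrow> 'e set \<Rightarrow> ('e \<Rightarrow> 'v set) \<Rightarrow> bool" where
  "matching_covered V E ends \<longleftrightarrow> connected_graph V E ends \<and> card V \<ge> 2 \<and>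
     (\<forall>e\<in>E. admissible V E ends e)"

definition removable :: "'v set \<Rightarrow> 'e set \<Rightarrow> ('e \<Rightarrow> 'v set) \<Rightarrow> 'e \<Rightarrow> bool" where
  "removable V E ends e \<longleftrightarrow> e \<in> E \<and> matching_covered V (E - {e}) ends"

definition nonremovable :: "'v set \<Rightarrow> 'e set \<Rightarrow> ('e \<Rightarrow> 'v set) \<Rightarrow> 'e \<Rightarrow> bool" where
  "nonremovable V E ends e \<longleftrightarrow> e \<in> E \<and> \<not> matching_covered V (E - {e}) ends"

definition is_bipartition :: "'v set \<Rightarrow> 'e set \<Rightarrow> ('e \<Rightarrow> 'v set) \<Rightarrow> 'v set \<Rightarrow> 'v set \<Rightarrow> bool" where
  "is_bipartition V E ends U W \<longleftrightarrow> U \<union> W = V \<and> U \<inter> W = {} \<and>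
     (\<forall>e\<in>E. card (ends e \<inter> U) = 1 \<and> card (ends e \<inter> W) = 1)"

definition bipartite :: "'v set \<Rightarrow> 'e set \<Rightarrow> ('e \<Rightarrow> 'v set) \<Rightarrow> bool" where
  "bipartite V E ends \<longleftrightarrow> (\<exists>U W. is_bipartition V E ends U W)"

definition del_edges :: "'e set \<Rightarrow> ('e \<Rightarrow> 'v set) \<Rightarrow> 'v set \<Rightarrow> 'e set" where
  "del_edges E ends X = {e \<in> E. ends e \<inter> X = {}}"

definition three_connected :: "'v set \<Rightarrow> 'e set \<Rightarrow> ('e \<Rightarrow> 'v set) \<Rightarrow> bool" where
  "three_connected V E ends \<longleftrightarrow> card V > 3 \<and>
     (\<forall>X. X \<subseteq> V \<longrightarrow> card X < 3 \<longrightarrow> connected_graph (V - X) (del_edges E ends X) ends)"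

definition brick :: "'v set \<Rightarrow> 'e set \<Rightarrow> ('e \<Rightarrow> 'v set) \<Rightarrow> bool" where
  "brick V E ends \<longleftrightarrow> three_connected V E ends \<and> \<not> bipartite V E ends \<and>
     (\<forall>x\<in>V. \<forall>y\<in>V. x \<noteq> y \<longrightarrow>
        (\<exists>M. perfect_matching (V - {x, y}) (del_edges E ends {x, y}) ends M))"

end

theory Submission
  imports Defs
begin

text \<open>Let H = G - e1 - e2, with sides U \<supseteq> ends e1 and W \<supseteq> ends e2. Since
  card U = card W, every perfect matching of G using e1 also uses e2. If a perfect matching
  of G using e1 avoided a type I edge e, it would cover e1 and e2 in G - e, while H - e
  covers all other edges, so G - e would be matching covered. Hence all type I edges lie
  in one perfect matching, and at most one of them meets any vertex.

  For type II edges at v \<in> U (the other side is symmetric), Hall's theorem turns the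
  nonremovability of an edge a = vw of H into a set Y \<subseteq> W with w \<in> Y, which v reaches
  only through a and which has at most card Y + 1 neighbours. Proper nonempty subsets of W
  have at least one more neighbour than elements because H is matching covered, so by
  submodularity of the neighbourhood such sets for three distinct edges at v would be
  pairwise disjoint. The brick property (G - v - x has a perfect matching) forces each of
  them to contain an end of e2, which has only two ends.\<close>

section \<open>Hall's theorem\<close>

lemma hall_condition_contract:
  fixes N :: "'a \<Rightarrow> 'b set"
  assumes fin: "finite A" "\<forall>a\<in>A. finite (N a)"
    and hall: "\<forall>S\<subseteq>A. card S \<le> card (\<Union>(N ` S))"
    and S: "S \<subseteq> A" "card (\<Union>(N ` S)) = card S"
  shows "\<forall>T\<subseteq>A - S. card T \<le> card (\<Union>a\<in>T. N a - \<Union>(N ` S))"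
proof (intro allI impI)
  fix T assume T: "T \<subseteq> A - S"
  let ?R = "\<Union>(N ` S)"
  have "finite T" "finite S"
    using T S fin(1) finite_subset by blast+
  then have finite: "finite T" "finite S" "finite ?R" "finite (\<Union>a\<in>T. N a - ?R)"
    using T S fin(2) by (auto simp: subset_iff)
  have "card T + card S = card (T \<union> S)"
    using T finite by (subst card_Un_disjoint) auto
  also have "\<dots> \<le> card (\<Union>(N ` (T \<union> S)))"
    by (intro hall[rule_format]) (use T S in blast)
  also have "\<Union>(N ` (T \<union> S)) = (\<Union>a\<in>T. N a - ?R) \<union> ?R"
    by auto
  also have "card \<dots> = card (\<Union>a\<in>T. N a - ?R) + card S"
    using finite S(2) by (subst card_Un_disjoint) auto
  finally show "card T \<le> card (\<Union>a\<in>T. N a - ?R)"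
    by simp
qed

lemma hall_condition_delete:
  fixes N :: "'a \<Rightarrow> 'b set"
  assumes strict: "\<forall>S. S \<subseteq> A \<longrightarrow> S \<noteq> {} \<longrightarrow> S \<noteq> A \<longrightarrow> card S < card (\<Union>(N ` S))"
    and a: "a \<in> A"
  shows "\<forall>T\<subseteq>A - {a}. card T \<le> card (\<Union>x\<in>T. N x - {b})"
proof (intro allI impI)
  fix T assume T: "T \<subseteq> A - {a}"
  show "card T \<le> card (\<Union>x\<in>T. N x - {b})"
  proof (cases "T = {}")
    case False
    then have "card T < card (\<Union>(N ` T))"
      using strict T a by blast
    moreover have "(\<Union>x\<in>T. N x - {b}) = \<Union>(N ` T) - {b}"
      by blast
    then have "card (\<Union>(N ` T)) \<le> card (\<Union>x\<in>T. N x - {b}) + 1"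
      using diff_card_le_card_Diff[of "{b}" "\<Union>(N ` T)"] by simp
    ultimately show ?thesis
      by linarith
  qed simp
qed

lemma representatives_Un:
  assumes "S \<inter> T = {}" and f1: "inj_on f1 S" "\<forall>a\<in>S. f1 a \<in> N a"
    and f2: "inj_on f2 T" "\<forall>a\<in>T. f2 a \<in> N a - \<Union>(N ` S)"
  shows "\<exists>f. inj_on f (S \<union> T) \<and> (\<forall>a\<in>S \<union> T. f a \<in> N a)"
proof -
  define f where "f a = (if a \<in> S then f1 a else f2 a)" for a
  have on_S: "\<forall>a\<in>S. f a = f1 a" and on_T: "\<forall>a\<in>T. f a = f2 a"
    using assms(1) unfolding f_def by auto
  have "inj_on f S" "inj_on f T"
    using inj_on_cong[of S f f1] inj_on_cong[of T f f2] on_S on_T f1(1) f2(1) by simp_all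
  moreover have "f ` S \<subseteq> \<Union>(N ` S)" "f ` T \<inter> \<Union>(N ` S) = {}"
    using f1(2) f2(2) on_S on_T by auto
  ultimately have "inj_on f (S \<union> T)"
    unfolding inj_on_Un using assms(1) by (auto simp: Diff_triv Int_commute)
  moreover have "\<forall>a\<in>S \<union> T. f a \<in> N a"
    using f1(2) f2(2) on_S on_T by auto
  ultimately show ?thesis
    by blast
qed

text \<open>Halmos and Vaughan's induction: either some proper nonempty S \<subseteq> A is critical,
  and A splits into S and A - S, or every such S has surplus, and one element of A can be
  matched arbitrarily.\<close>

theorem hall_marriage:
  fixes N :: "'a \<Rightarrow> 'b set"
  assumes "finite A" "\<forall>a\<in>A. finite (N a)" "\<forall>S\<subseteq>A. card S \<le> card (\<Union>(N ` S))"
  shows "\<exists>f. inj_on f A \<and> (\<forall>a\<in>A. f a \<in> N a)"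
  using assms
proof (induction "card A" arbitrary: A N rule: less_induct)
  case less
  note fin = less.prems(1,2) and hall = less.prems(3)
  show ?case
  proof (cases "\<exists>S. S \<subseteq> A \<and> S \<noteq> {} \<and> S \<noteq> A \<and> card (\<Union>(N ` S)) = card S")
    case True
    then obtain S where S: "S \<subseteq> A" "S \<noteq> {}" "S \<noteq> A" "card (\<Union>(N ` S)) = card S"
      by blast
    let ?N' = "\<lambda>a. N a - \<Union>(N ` S)"
    have "finite S"
      using S fin finite_subset by blast
    moreover have "card S < card A"
      using S fin by (auto intro: psubset_card_mono)
    moreover have "0 < card S"
      using \<open>finite S\<close> S(2) by (simp add: card_gt_0_iff)
    ultimately have "card (A - S) < card A"
      using S by (simp add: card_Diff_subset)
    have "\<forall>T\<subseteq>S. card T \<le> card (\<Union>(N ` T))" "\<forall>a\<in>S. finite (N a)"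
      using hall fin(2) S(1) by auto
    then obtain f1 where f1: "inj_on f1 S" "\<forall>a\<in>S. f1 a \<in> N a"
      using less.hyps[OF \<open>card S < card A\<close> \<open>finite S\<close>] by blast
    have "finite (A - S)" "\<forall>a\<in>A - S. finite (?N' a)"
      using fin by auto
    then obtain f2 where f2: "inj_on f2 (A - S)" "\<forall>a\<in>A - S. f2 a \<in> ?N' a"
      using less.hyps[OF \<open>card (A - S) < card A\<close> _ _ hall_condition_contract[OF fin hall S(1,4)]]
      by blast
    have "\<exists>f. inj_on f (S \<union> (A - S)) \<and> (\<forall>a\<in>S \<union> (A - S). f a \<in> N a)"
      by (rule representatives_Un[OF _ f1 f2]) blast
    moreover have "S \<union> (A - S) = A"
      using S(1) by blast
    ultimately show ?thesis
      by (simp only:)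
  next
    case False
    then have strict: "\<forall>S. S \<subseteq> A \<longrightarrow> S \<noteq> {} \<longrightarrow> S \<noteq> A \<longrightarrow> card S < card (\<Union>(N ` S))"
      using hall by (metis le_neq_implies_less)
    show ?thesis
    proof (cases "A = {}")
      case False
      then obtain a where a: "a \<in> A"
        by blast
      then have "N a \<noteq> {}"
        using hall[rule_format, of "{a}"] by auto
      then obtain b where b: "b \<in> N a"
        by blast
      have "card (A - {a}) < card A"
        using card_Diff1_less[OF fin(1) a] .
      moreover have "finite (A - {a})" "\<forall>x\<in>A - {a}. finite (N x - {b})"
        using fin by auto
      ultimately obtain f where f: "inj_on f (A - {a})" "\<forall>x\<in>A - {a}. f x \<in> N x - {b}"
        using less.hyps[OF _ _ _ hall_condition_delete[OF strict a, of b]] by blast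
      then have "inj_on (f(a := b)) A \<and> (\<forall>x\<in>A. (f(a := b)) x \<in> N x)"
        using a b by (auto simp: inj_on_def)
      then show ?thesis
        by blast
    qed simp
  qed
qed

section \<open>Perfect matchings and connectivity\<close>

lemma is_graph_subset: "is_graph V E ends \<Longrightarrow> F \<subseteq> E \<Longrightarrow> is_graph V F ends"
  unfolding is_graph_def by (auto dest: finite_subset)

lemma is_graph_del_edges: "is_graph V E ends \<Longrightarrow> is_graph (V - X) (del_edges E ends X) ends"
  unfolding is_graph_def del_edges_def by auto

lemma is_graph_edgeE:
  assumes "is_graph V E ends" "e \<in> E"
  obtains p q where "ends e = {p, q}" "p \<noteq> q" "p \<in> V" "q \<in> V"
  using assms unfolding is_graph_def by (metis card_2_iff insert_subset)

lemma perfect_matching_mono: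
  "perfect_matching V F ends M \<Longrightarrow> F \<subseteq> F' \<Longrightarrow> perfect_matching V F' ends M"
  unfolding perfect_matching_def by blast

lemma perfect_matching_insert:
  assumes M: "perfect_matching (V - ends g) F ends M" and g: "g \<in> F"
    and disjoint: "\<forall>e\<in>M. ends e \<inter> ends g = {}"
  shows "perfect_matching V F ends (insert g M)"
  unfolding perfect_matching_def
proof (intro conjI ballI)
  show "insert g M \<subseteq> F"
    using M g unfolding perfect_matching_def by blast
next
  fix z assume "z \<in> V"
  show "\<exists>!e. e \<in> insert g M \<and> z \<in> ends e"
  proof (cases "z \<in> ends g")
    case True
    then show ?thesis
      using disjoint by (intro ex1I[of _ g]) auto
  next
    case False
    then have "\<exists>!e. e \<in> M \<and> z \<in> ends e"
      using M \<open>z \<in> V\<close> unfolding perfect_matching_def by blast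
    then show ?thesis
      using False by auto
  qed
qed

lemma brick_edge_admissible:
  assumes graph: "is_graph V E ends" and brick: "brick V E ends" and e: "e \<in> E"
  shows "admissible V E ends e"
proof -
  obtain x y where xy: "ends e = {x, y}" "x \<noteq> y" "x \<in> V" "y \<in> V"
    using graph e by (rule is_graph_edgeE)
  then obtain M where M: "perfect_matching (V - ends e) (del_edges E ends (ends e)) ends M"
    using brick unfolding brick_def by metis
  then have "perfect_matching (V - ends e) E ends M"
    by (rule perfect_matching_mono) (auto simp: del_edges_def)
  moreover have "\<forall>f\<in>M. ends f \<inter> ends e = {}"
    using M unfolding perfect_matching_def del_edges_def by auto
  ultimately have "perfect_matching V E ends (insert e M)"
    by (rule perfect_matching_insert[OF _ e])
  then show ?thesis
    unfolding admissible_def by blast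
qed

lemma perfect_matching_of_injection:
  assumes A: "finite A" "A \<inter> B = {}" "card B = card A"
    and f: "inj_on f B" "\<forall>b\<in>B. f b \<in> A \<and> (\<exists>e\<in>F. ends e = {f b, b})"
  shows "\<exists>M. perfect_matching (A \<union> B) F ends M \<and> (\<forall>e\<in>M. ends e \<subseteq> A \<union> B)"
proof -
  define edge where "edge b = (SOME e. e \<in> F \<and> ends e = {f b, b})" for b
  have edge: "edge b \<in> F \<and> ends (edge b) = {f b, b}" if "b \<in> B" for b
    unfolding edge_def by (rule someI_ex) (use f(2) that in blast)
  have "f ` B \<subseteq> A" "card (f ` B) = card A"
    using A(3) f by (auto simp: card_image)
  then have "f ` B = A"
    using A(1) by (intro card_subset_eq)
  have unique: "\<exists>!e. e \<in> edge ` B \<and> z \<in> ends e" if z: "z \<in> A \<union> B" for z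
  proof -
    have "z \<in> f ` B \<or> z \<in> B"
      using z \<open>f ` B = A\<close> by simp
    then obtain b0 where b0: "b0 \<in> B" "z \<in> {f b0, b0}"
      by auto
    have same: "b = b0" if b: "b \<in> B" "z \<in> {f b, b}" for b
    proof -
      have "f b \<in> A" "f b0 \<in> A"
        using b(1) b0(1) f(2) by blast+
      then have "f b = f b0 \<or> b = b0"
        using b b0 A(2) by blast
      then show ?thesis
        using f(1) b(1) b0(1) by (auto dest: inj_onD)
    qed
    show ?thesis
    proof (rule ex1I[of _ "edge b0"])
      show "edge b0 \<in> edge ` B \<and> z \<in> ends (edge b0)"
        using b0 edge by auto
    next
      fix e assume "e \<in> edge ` B \<and> z \<in> ends e"
      then obtain b where "b \<in> B" "e = edge b" "z \<in> {f b, b}"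
        using edge by auto
      then show "e = edge b0"
        using same by simp
    qed
  qed
  have "edge ` B \<subseteq> F"
    using edge by blast
  then have "perfect_matching (A \<union> B) F ends (edge ` B)"
    unfolding perfect_matching_def using unique by simp
  moreover have "\<forall>e\<in>edge ` B. ends e \<subseteq> A \<union> B"
    using edge f(2) by fastforce
  ultimately show ?thesis
    by blast
qed

text \<open>Both are only meaningful at vertices covered by M: elsewhere the description
  operator THE yields an unspecified value.\<close>

definition matching_edge :: "'e set \<Rightarrow> ('e \<Rightarrow> 'v set) \<Rightarrow> 'v \<Rightarrow> 'e" where
  "matching_edge M ends z = (THE e. e \<in> M \<and> z \<in> ends e)"

definition mate :: "'e set \<Rightarrow> ('e \<Rightarrow> 'v set) \<Rightarrow> 'v \<Rightarrow> 'v" where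
  "mate M ends z = (THE u. u \<in> ends (matching_edge M ends z) \<and> u \<noteq> z)"

context
  fixes V F ends M
  assumes graph: "is_graph V F ends" and pm: "perfect_matching V F ends M"
begin

lemma matching_edge_eq:
  assumes "z \<in> V" "e \<in> M" "z \<in> ends e"
  shows "matching_edge M ends z = e"
proof -
  have "\<exists>!e. e \<in> M \<and> z \<in> ends e"
    using assms(1) pm unfolding perfect_matching_def by blast
  then show ?thesis
    unfolding matching_edge_def by (rule the1_equality) (use assms in blast)
qed

lemma matching_edge_covers:
  assumes "z \<in> V"
  shows "matching_edge M ends z \<in> M" "z \<in> ends (matching_edge M ends z)"
  using assms matching_edge_eq pm unfolding perfect_matching_def by metis+

lemma ends_matching_edge:
  assumes "z \<in> V"
  shows "ends (matching_edge M ends z) = {z, mate M ends z}" "mate M ends z \<noteq> z"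
    "mate M ends z \<in> V"
proof -
  have "matching_edge M ends z \<in> F"
    using matching_edge_covers(1)[OF assms] pm unfolding perfect_matching_def by blast
  then obtain p q where pq: "ends (matching_edge M ends z) = {p, q}" "p \<noteq> q" "p \<in> V" "q \<in> V"
    by (rule is_graph_edgeE[OF graph])
  then obtain u where u: "ends (matching_edge M ends z) = {z, u}" "u \<noteq> z" "u \<in> V"
    using matching_edge_covers(2)[OF assms] by auto
  moreover have "mate M ends z = u"
    unfolding mate_def using u by auto
  ultimately show "ends (matching_edge M ends z) = {z, mate M ends z}" "mate M ends z \<noteq> z"
    "mate M ends z \<in> V"
    by auto
qed

lemma matching_edge_mate:
  assumes "z \<in> V"
  shows "matching_edge M ends (mate M ends z) = matching_edge M ends z"
  using assms ends_matching_edge[OF assms] matching_edge_covers[OF assms]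
  by (intro matching_edge_eq) auto

lemma inj_on_mate: "inj_on (mate M ends) V"
proof (rule inj_onI)
  fix x y assume xy: "x \<in> V" "y \<in> V" "mate M ends x = mate M ends y"
  then have "matching_edge M ends x = matching_edge M ends y"
    using matching_edge_mate by metis
  then show "x = y"
    using ends_matching_edge[OF xy(1)] ends_matching_edge[OF xy(2)] xy(3)
    by (metis doubleton_eq_iff)
qed

lemma in_ends_if_mate_in_ends:
  assumes "z \<in> V" "e \<in> M" "mate M ends z \<in> ends e"
  shows "z \<in> ends e"
proof -
  have "matching_edge M ends (mate M ends z) = e"
    using matching_edge_eq[OF ends_matching_edge(3)[OF assms(1)] assms(2,3)] .
  then show ?thesis
    using matching_edge_mate[OF assms(1)] matching_edge_covers(2)[OF assms(1)] by simp
qed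

lemma card_le_if_mates_in:
  assumes "Y \<subseteq> V" "finite S" "\<forall>z\<in>Y. mate M ends z \<in> S"
  shows "card Y \<le> card S"
  using assms inj_on_mate by (intro card_inj_on_le[of "mate M ends"]) (auto intro: inj_on_subset)

end

lemma sym_adj_rel: "sym (adj_rel F ends)"
  unfolding adj_rel_def sym_def by (auto simp: insert_commute)

lemma connected_graph_mono:
  assumes "connected_graph V F ends" "F \<subseteq> F'"
  shows "connected_graph V F' ends"
proof -
  have "adj_rel F ends \<subseteq> adj_rel F' ends"
    using assms(2) unfolding adj_rel_def by blast
  then show ?thesis
    using assms(1) rtrancl_mono unfolding connected_graph_def by blast
qed

lemma connected_graph_delete_edge:
  assumes conn: "connected_graph V F ends" and a: "ends a = {p, q}"
    and joined: "(p, q) \<in> (adj_rel (F - {a}) ends)\<^sup>*"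
  shows "connected_graph V (F - {a}) ends"
proof -
  let ?R = "adj_rel (F - {a}) ends"
  have "(q, p) \<in> ?R\<^sup>*"
    using joined sym_adj_rel sym_rtrancl by (metis symD)
  have "(x, y) \<in> ?R\<^sup>*" if xy: "(x, y) \<in> adj_rel F ends" for x y
  proof -
    obtain e where e: "e \<in> F" "ends e = {x, y}"
      using xy unfolding adj_rel_def by blast
    show ?thesis
    proof (cases "e = a")
      case True
      then show ?thesis
        using e a joined \<open>(q, p) \<in> ?R\<^sup>*\<close> by (auto simp: doubleton_eq_iff)
    next
      case False
      then show ?thesis
        using e unfolding adj_rel_def by blast
    qed
  qed
  then have "adj_rel F ends \<subseteq> ?R\<^sup>*"
    by auto
  then have "(adj_rel F ends)\<^sup>* \<subseteq> ?R\<^sup>*"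
    by (rule rtrancl_subset_rtrancl)
  then show ?thesis
    using conn unfolding connected_graph_def by blast
qed

lemma adj_rel_path_leaves:
  assumes "(s, t) \<in> (adj_rel F ends)\<^sup>*" "s \<in> X" "t \<notin> X"
  shows "\<exists>e\<in>F. \<exists>p q. ends e = {p, q} \<and> p \<in> X \<and> q \<notin> X"
  using assms
proof (induction rule: rtrancl_induct)
  case (step y z)
  then show ?case
    unfolding adj_rel_def by blast
qed simp

section \<open>Bipartite matching covered graphs\<close>

locale bipartite_matching_covered =
  fixes V :: "'v set" and F :: "'e set" and ends :: "'e \<Rightarrow> 'v set" and U W :: "'v set"
  assumes graph: "is_graph V F ends"
    and matching_covered: "matching_covered V F ends"
    and bipartition: "is_bipartition V F ends U W"
begin

lemma swap: "bipartite_matching_covered V F ends W U"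
  using graph matching_covered bipartition
  unfolding bipartite_matching_covered_def is_bipartition_def by auto

lemma sides: "U \<union> W = V" "U \<inter> W = {}"
  using bipartition unfolding is_bipartition_def by auto

lemma finite_sides: "finite U" "finite W"
  using graph sides unfolding is_graph_def by (metis finite_Un)+

lemma edge_end_in_W:
  assumes f: "f \<in> F" "ends f = {p, q}" and p: "p \<in> U"
  shows "q \<in> W"
proof -
  have "card (ends f \<inter> U) = 1" "card (ends f) = 2" "ends f \<subseteq> V"
    using f graph bipartition unfolding is_graph_def is_bipartition_def by auto
  then have "q \<notin> U" "q \<in> V"
    using f p by (auto simp: card_2_iff doubleton_eq_iff)
  then show ?thesis
    using sides by blast
qed

lemmas edge_end_in_U = bipartite_matching_covered.edge_end_in_W[OF swap]

lemma edge_endsE: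
  assumes f: "f \<in> F"
  obtains u w where "ends f = {u, w}" "u \<in> U" "w \<in> W"
proof -
  obtain p q where pq: "ends f = {p, q}" "p \<in> V" "q \<in> V"
    using graph f by (rule is_graph_edgeE)
  then have "ends f = {q, p}"
    by auto
  then show ?thesis
    using that pq f sides edge_end_in_W edge_end_in_U by blast
qed

lemma edge_ends_eq:
  assumes "f \<in> F" "u \<in> ends f" "u \<in> U" "w \<in> ends f" "w \<in> W"
  shows "ends f = {u, w}"
  using assms sides by (elim edge_endsE) auto

lemma ex_perfect_matching: "\<exists>M. perfect_matching V F ends M"
proof -
  have "2 \<le> card V"
    using matching_covered unfolding matching_covered_def by blast
  then obtain T where "T \<subseteq> V" "card T = 2"
    by (rule obtain_subset_with_card_n)
  then obtain s t where "s \<in> V" "t \<in> V" "s \<noteq> t"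
    by (auto simp: card_2_iff)
  then have "(s, t) \<in> (adj_rel F ends)\<^sup>*"
    using matching_covered unfolding matching_covered_def connected_graph_def by blast
  then obtain f where "f \<in> F"
    using adj_rel_path_leaves[of s t F ends "{s}"] \<open>s \<noteq> t\<close> by blast
  then show ?thesis
    using matching_covered unfolding matching_covered_def admissible_def by blast
qed

lemma matching_edge_in_F:
  assumes "perfect_matching V F ends M" "z \<in> V"
  shows "matching_edge M ends z \<in> F"
  using matching_edge_covers(1)[OF graph assms] assms(1) unfolding perfect_matching_def by blast

lemma mate_in_W:
  assumes M: "perfect_matching V F ends M" and z: "z \<in> U"
  shows "mate M ends z \<in> W"
proof -
  have "z \<in> V"
    using z sides by blast
  then show ?thesis
    using edge_end_in_W[OF matching_edge_in_F[OF M] ends_matching_edge(1)[OF graph M] z] by simp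
qed

lemma card_U_le_card_W: "card U \<le> card W"
proof -
  obtain M where M: "perfect_matching V F ends M"
    using ex_perfect_matching by blast
  have "U \<subseteq> V"
    using sides by blast
  then show ?thesis
    using card_le_if_mates_in[OF graph M _ finite_sides(2)] mate_in_W[OF M] by blast
qed

lemma card_U_eq_card_W: "card U = card W"
  using card_U_le_card_W bipartite_matching_covered.card_U_le_card_W[OF swap] by simp

definition nbhd :: "'v set \<Rightarrow> 'v set" where
  "nbhd Y = {u \<in> U. \<exists>f\<in>F. u \<in> ends f \<and> ends f \<inter> Y \<noteq> {}}"

lemma finite_nbhd: "finite (nbhd Y)"
  unfolding nbhd_def using finite_sides by auto

lemma nbhdI:
  assumes "f \<in> F" "ends f = {z, u}" "z \<in> Y" "z \<in> W"
  shows "u \<in> nbhd Y"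
  using assms edge_end_in_U unfolding nbhd_def by blast

lemma nbhd_Un: "nbhd (Y1 \<union> Y2) = nbhd Y1 \<union> nbhd Y2"
  unfolding nbhd_def by blast

text \<open>An edge g leaving Y \<union> nbhd Y lies in a perfect matching, which then matches Y into
  nbhd Y minus the end of g.\<close>

lemma card_nbhd_gt:
  assumes Y: "Y \<subseteq> W" "Y \<noteq> {}" "Y \<noteq> W"
  shows "card Y < card (nbhd Y)"
proof -
  obtain s t where st: "s \<in> Y" "t \<in> W - Y"
    using Y by blast
  then have "(s, t) \<in> (adj_rel F ends)\<^sup>*" "t \<notin> Y \<union> nbhd Y"
    using matching_covered Y sides unfolding matching_covered_def connected_graph_def nbhd_def
    by auto
  then obtain g p q where g: "g \<in> F" "ends g = {p, q}" "p \<in> Y \<union> nbhd Y" "q \<notin> Y \<union> nbhd Y"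
    using adj_rel_path_leaves[of s t F ends "Y \<union> nbhd Y"] st by blast
  have "p \<notin> Y"
  proof
    assume "p \<in> Y"
    then have "q \<in> nbhd Y"
      using nbhdI[OF g(1,2)] Y(1) by blast
    then show False
      using g(4) by blast
  qed
  then have p: "p \<in> nbhd Y" "p \<in> U"
    using g(3) unfolding nbhd_def by auto
  then have q: "q \<in> W - Y"
    using edge_end_in_W[OF g(1,2)] g(4) by blast
  obtain M where M: "perfect_matching V F ends M" "g \<in> M"
    using matching_covered g unfolding matching_covered_def admissible_def by blast
  have "mate M ends z \<in> nbhd Y - {p}" if z: "z \<in> Y" for z
  proof -
    have zV: "z \<in> V"
      using z Y sides by blast
    then have e: "matching_edge M ends z \<in> F" "ends (matching_edge M ends z) = {z, mate M ends z}"
      using matching_edge_in_F[OF M(1)] ends_matching_edge[OF graph M(1)] by auto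
    have "z \<notin> ends g"
      using z Y(1) p(2) q g(2) sides by auto
    then have "mate M ends z \<noteq> p"
      using in_ends_if_mate_in_ends[OF graph M(1) zV M(2)] g(2) by auto
    moreover have "z \<in> W"
      using z Y(1) by blast
    ultimately show ?thesis
      using nbhdI[OF e z] by blast
  qed
  moreover have "Y \<subseteq> V" "finite (nbhd Y - {p})"
    using Y(1) sides finite_nbhd by auto
  ultimately have "card Y \<le> card (nbhd Y - {p})"
    using card_le_if_mates_in[OF graph M(1)] by blast
  also have "\<dots> < card (nbhd Y)"
    using p(1) finite_nbhd by (rule card_Diff1_less[rotated])
  finally show ?thesis .
qed

text \<open>Submodularity of card \<circ> nbhd, played against the surplus of Y1 \<union> Y2 and
  Y1 \<inter> Y2.\<close>

lemma tight_sets_disjoint: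
  assumes Y: "Y1 \<subseteq> W" "Y2 \<subseteq> W" "Y1 \<union> Y2 \<noteq> W"
    and v: "v \<in> nbhd Y1 \<inter> nbhd Y2" "v \<notin> nbhd (Y1 \<inter> Y2)"
    and tight: "card (nbhd Y1) \<le> card Y1 + 1" "card (nbhd Y2) \<le> card Y2 + 1"
  shows "Y1 \<inter> Y2 = {}"
proof (rule ccontr)
  assume meet: "Y1 \<inter> Y2 \<noteq> {}"
  have "finite Y1" "finite Y2"
    using Y finite_sides finite_subset by auto
  then have sum_Y: "card Y1 + card Y2 = card (Y1 \<union> Y2) + card (Y1 \<inter> Y2)"
    by (rule card_Un_Int)
  have sum_nbhd: "card (nbhd Y1) + card (nbhd Y2) = card (nbhd (Y1 \<union> Y2)) + card (nbhd Y1 \<inter> nbhd Y2)"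
    unfolding nbhd_Un using finite_nbhd[of Y1] finite_nbhd[of Y2] by (rule card_Un_Int)
  have surplus_Un: "card (Y1 \<union> Y2) < card (nbhd (Y1 \<union> Y2))"
    using Y meet by (intro card_nbhd_gt) auto
  have surplus_Int: "card (Y1 \<inter> Y2) < card (nbhd (Y1 \<inter> Y2))"
    using Y meet by (intro card_nbhd_gt) auto
  have "nbhd (Y1 \<inter> Y2) \<subseteq> (nbhd Y1 \<inter> nbhd Y2) - {v}"
    using v unfolding nbhd_def by blast
  then have "card (nbhd (Y1 \<inter> Y2)) \<le> card ((nbhd Y1 \<inter> nbhd Y2) - {v})"
    using finite_nbhd by (intro card_mono) auto
  also have "\<dots> < card (nbhd Y1 \<inter> nbhd Y2)"
    using v finite_nbhd by (intro card_Diff1_less) auto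
  finally show False
    using sum_Y sum_nbhd tight surplus_Un surplus_Int by linarith
qed

text \<open>Since v reaches Y only through a, such a set Y has at most card Y neighbours
  in F - {a}: it is the Hall obstruction witnessing that a is not removable.\<close>

definition blocking_set :: "'v \<Rightarrow> 'e \<Rightarrow> 'v set \<Rightarrow> bool" where
  "blocking_set v a Y \<longleftrightarrow> Y \<subseteq> W \<and> ends a \<inter> Y \<noteq> {} \<and>
     (\<forall>f\<in>F - {a}. v \<in> ends f \<longrightarrow> ends f \<inter> Y = {}) \<and> card (nbhd Y) \<le> card Y + 1"

lemma blocking_set_tight:
  assumes "blocking_set v a Y" "a \<in> F" "v \<in> ends a" "v \<in> U"
  shows "Y \<subseteq> W" "Y \<noteq> {}" "v \<in> nbhd Y" "card (nbhd Y) \<le> card Y + 1"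
  using assms unfolding blocking_set_def nbhd_def by blast+

lemma blocking_sets_disjoint:
  assumes v: "v \<in> U" "v \<in> ends a" "v \<in> ends b" "v \<in> ends c"
    and edges: "a \<in> F" "b \<in> F" "c \<in> F" "a \<noteq> b" "c \<notin> {a, b}"
    and Y: "blocking_set v a Y1" "blocking_set v b Y2"
  shows "Y1 \<inter> Y2 = {}"
proof (rule tight_sets_disjoint)
  obtain u w where w: "ends c = {u, w}" "w \<in> W"
    using edges(3) by (rule edge_endsE)
  then have "w \<notin> Y1" "w \<notin> Y2"
    using Y v(4) edges(3,5) unfolding blocking_set_def by auto
  then show "Y1 \<union> Y2 \<noteq> W"
    using w(2) by blast
  have a_misses: "ends a \<inter> Y2 = {}"
    using Y(2) edges(1,4) v(2) unfolding blocking_set_def by blast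
  show "v \<notin> nbhd (Y1 \<inter> Y2)"
  proof
    assume "v \<in> nbhd (Y1 \<inter> Y2)"
    then obtain f where "f \<in> F" "v \<in> ends f" "ends f \<inter> (Y1 \<inter> Y2) \<noteq> {}"
      unfolding nbhd_def by blast
    then show False
      using a_misses Y(1) unfolding blocking_set_def by (cases "f = a") blast+
  qed
  show "v \<in> nbhd Y1 \<inter> nbhd Y2"
    using blocking_set_tight(3) v edges Y by blast
qed (use Y in \<open>auto simp: blocking_set_def\<close>)

lemma nbhd_closed_set_subset:
  assumes a: "ends a = {v, w}" "w \<in> W"
    and closed: "\<And>z u f. z \<in> C \<Longrightarrow> f \<in> F - {a} \<Longrightarrow> ends f = {z, u} \<Longrightarrow> u \<in> C"
  shows "nbhd (C \<inter> W) \<subseteq> insert v (C \<inter> U)"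
proof
  fix u assume "u \<in> nbhd (C \<inter> W)"
  then obtain f z where f: "f \<in> F" "u \<in> U" "u \<in> ends f" "z \<in> ends f" "z \<in> C \<inter> W"
    unfolding nbhd_def by blast
  then have ends_f: "ends f = {z, u}"
    using edge_ends_eq[of f u z] by auto
  show "u \<in> insert v (C \<inter> U)"
  proof (cases "f = a")
    case True
    then have "u \<in> {v, w}"
      using f(3) a(1) by simp
    then show ?thesis
      using f(2) a(2) sides by blast
  next
    case False
    then show ?thesis
      using closed[OF _ _ ends_f] f by blast
  qed
qed

lemma blocking_set_closed_set:
  assumes v: "v \<in> U" and a: "a \<in> F" "ends a = {v, w}" and C: "w \<in> C" "v \<notin> C"
    and closed: "\<And>z u f. z \<in> C \<Longrightarrow> f \<in> F - {a} \<Longrightarrow> ends f = {z, u} \<Longrightarrow> u \<in> C"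
  shows "blocking_set v a (C \<inter> W)"
proof -
  have w: "w \<in> W"
    using edge_end_in_W[OF a v] .
  have "card (nbhd (C \<inter> W)) \<le> card (insert v (C \<inter> U))"
    using nbhd_closed_set_subset[OF a(2) w closed] finite_sides by (intro card_mono) auto
  also have "\<dots> \<le> card (C \<inter> U) + 1"
    using finite_sides by (simp add: card_insert_if)
  finally have nbhd_le: "card (nbhd (C \<inter> W)) \<le> card (C \<inter> U) + 1" .
  obtain M where M: "perfect_matching V F ends M"
    using ex_perfect_matching by blast
  have "mate M ends z \<in> C \<inter> W" if z: "z \<in> C \<inter> U" for z
  proof -
    have "z \<in> V"
      using z sides by blast
    then have e: "matching_edge M ends z \<in> F" "ends (matching_edge M ends z) = {z, mate M ends z}"
      using matching_edge_in_F[OF M] ends_matching_edge[OF graph M] by auto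
    have "z \<notin> {v, w}"
      using z C(2) w sides by blast
    then have "matching_edge M ends z \<noteq> a"
      using e(2) a(2) by auto
    then show ?thesis
      using closed[OF _ _ e(2)] e(1) z mate_in_W[OF M] by blast
  qed
  moreover have "C \<inter> U \<subseteq> V" "finite (C \<inter> W)"
    using sides finite_sides by auto
  ultimately have "card (C \<inter> U) \<le> card (C \<inter> W)"
    using card_le_if_mates_in[OF graph M] by blast
  moreover have "ends f \<inter> (C \<inter> W) = {}" if f: "f \<in> F - {a}" "v \<in> ends f" for f
  proof (rule ccontr)
    assume "ends f \<inter> (C \<inter> W) \<noteq> {}"
    then obtain z where z: "z \<in> ends f" "z \<in> C \<inter> W"
      by blast
    then have "ends f = {z, v}"
      using edge_ends_eq[of f v z] f v by auto
    then show False
      using closed[of z f v] z f C(2) by blast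
  qed
  ultimately show ?thesis
    unfolding blocking_set_def using nbhd_le a(2) w C(1) by auto
qed

lemma blocking_set_if_disconnected:
  assumes v: "v \<in> U" and a: "a \<in> F" "ends a = {v, w}"
    and disconnected: "\<not> connected_graph V (F - {a}) ends"
  shows "\<exists>Y. blocking_set v a Y"
proof -
  let ?R = "adj_rel (F - {a}) ends"
  define C where "C = {z. (w, z) \<in> ?R\<^sup>*}"
  have closed: "u \<in> C" if "z \<in> C" "f \<in> F - {a}" "ends f = {z, u}" for z u f
  proof -
    have "(z, u) \<in> ?R"
      using that(2,3) unfolding adj_rel_def by blast
    then show ?thesis
      using that(1) rtrancl_into_rtrancl[of w z ?R u] unfolding C_def by blast
  qed
  have vC: "v \<notin> C"
  proof
    assume "v \<in> C"
    then have "(w, v) \<in> ?R\<^sup>*"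
      unfolding C_def by simp
    then have "(v, w) \<in> ?R\<^sup>*"
      by (rule symD[OF sym_rtrancl[OF sym_adj_rel]])
    moreover have "connected_graph V F ends"
      using matching_covered unfolding matching_covered_def by blast
    ultimately have "connected_graph V (F - {a}) ends"
      using a(2) connected_graph_delete_edge by metis
    then show False
      using disconnected by contradiction
  qed
  have wC: "w \<in> C"
    unfolding C_def by simp
  have "blocking_set v a (C \<inter> W)"
    by (rule blocking_set_closed_set[OF v a wC vC]) (rule closed)
  then show ?thesis
    by blast
qed

lemma admissible_if_hall:
  assumes g: "g \<in> F'" "ends g = {x, y}" "x \<in> U" "y \<in> W"
    and hall: "\<forall>S\<subseteq>W - {y}. card S \<le> card (\<Union>w\<in>S. {u \<in> U - {x}. \<exists>h\<in>F'. ends h = {u, w}})"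
  shows "admissible V F' ends g"
proof -
  let ?N = "\<lambda>w. {u \<in> U - {x}. \<exists>h\<in>F'. ends h = {u, w}}"
  have "finite (W - {y})" "\<forall>w\<in>W - {y}. finite (?N w)"
    using finite_sides by auto
  then obtain f where f: "inj_on f (W - {y})" "\<forall>w\<in>W - {y}. f w \<in> ?N w"
    using hall_marriage[of "W - {y}" ?N] hall by blast
  have "card (W - {y}) = card (U - {x})"
    using card_U_eq_card_W g(3,4) finite_sides by simp
  moreover have "finite (U - {x})" "(U - {x}) \<inter> (W - {y}) = {}"
    using finite_sides sides by auto
  moreover have "\<forall>w\<in>W - {y}. f w \<in> U - {x} \<and> (\<exists>h\<in>F'. ends h = {f w, w})"
    using f(2) by blast
  ultimately obtain M where M: "perfect_matching ((U - {x}) \<union> (W - {y})) F' ends M"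
      "\<forall>e\<in>M. ends e \<subseteq> (U - {x}) \<union> (W - {y})"
    using perfect_matching_of_injection[of "U - {x}" "W - {y}" f F' ends] f(1) by blast
  have "(U - {x}) \<union> (W - {y}) = V - ends g"
    unfolding g(2) sides(1)[symmetric] using g(3,4) sides(2) by auto
  then have "perfect_matching (V - ends g) F' ends M"
    using M(1) by simp
  moreover have "\<forall>e\<in>M. ends e \<inter> ends g = {}"
    using M(2) g(2-4) sides(2) by fastforce
  ultimately have "perfect_matching V F' ends (insert g M)"
    by (rule perfect_matching_insert[OF _ g(1)])
  then show ?thesis
    unfolding admissible_def by blast
qed

lemma nbhd_subset_without_edge:
  assumes "Y \<subseteq> W"
  shows "nbhd Y \<subseteq> insert x (\<Union>w\<in>Y. {u \<in> U - {x}. \<exists>h\<in>F - {a}. ends h = {u, w}})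
    \<union> {u \<in> ends a \<inter> U. ends a \<inter> Y \<noteq> {}}"
proof
  fix u assume "u \<in> nbhd Y"
  then obtain f w where f: "f \<in> F" "u \<in> U" "u \<in> ends f" "w \<in> ends f" "w \<in> Y"
    unfolding nbhd_def by blast
  then have "ends f = {u, w}"
    using edge_ends_eq assms by blast
  then show "u \<in> insert x (\<Union>w\<in>Y. {u \<in> U - {x}. \<exists>h\<in>F - {a}. ends h = {u, w}})
    \<union> {u \<in> ends a \<inter> U. ends a \<inter> Y \<noteq> {}}"
    using f by (cases "f = a") blast+
qed

lemma blocking_set_if_deficient:
  assumes v: "v \<in> U" and a: "a \<in> F" "v \<in> ends a" and Y: "Y \<subseteq> W" "Y \<noteq> W"
    and deficient: "card (\<Union>w\<in>Y. {u \<in> U - {x}. \<exists>h\<in>F - {a}. ends h = {u, w}}) < card Y"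
  shows "blocking_set v a Y"
proof -
  define K where "K = (\<Union>w\<in>Y. {u \<in> U - {x}. \<exists>h\<in>F - {a}. ends h = {u, w}})"
  have "K \<subseteq> U"
    unfolding K_def by blast
  then have finite_K: "finite K"
    using finite_sides(1) by (rule finite_subset)
  have "Y \<noteq> {}"
    using deficient by auto
  then have surplus: "card Y < card (nbhd Y)"
    using Y by (intro card_nbhd_gt)
  have "ends a \<inter> U = {v}"
    using a v sides by (elim edge_endsE) auto
  then have nbhd_sub: "nbhd Y \<subseteq> insert x K \<union> {u \<in> {v}. ends a \<inter> Y \<noteq> {}}"
    using nbhd_subset_without_edge[of Y x a] Y(1) unfolding K_def by auto
  have not_sub: "\<not> nbhd Y \<subseteq> insert x K"
  proof
    assume "nbhd Y \<subseteq> insert x K"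
    then have "card (nbhd Y) \<le> card (insert x K)"
      using finite_K by (intro card_mono) auto
    also have "\<dots> \<le> card K + 1"
      using finite_K by (simp add: card_insert_if)
    finally show False
      using surplus deficient unfolding K_def by linarith
  qed
  then have meets: "ends a \<inter> Y \<noteq> {}"
    using nbhd_sub by blast
  have misses: "ends f \<inter> Y = {}" if f: "f \<in> F - {a}" "v \<in> ends f" for f
  proof (rule ccontr)
    assume "ends f \<inter> Y \<noteq> {}"
    then obtain w where "w \<in> ends f" "w \<in> Y"
      by blast
    then have "ends f = {v, w}"
      using edge_ends_eq[of f v w] f v Y(1) by blast
    then have "v \<in> insert x K"
      using f \<open>w \<in> Y\<close> v unfolding K_def by blast
    then show False
      using not_sub nbhd_sub by blast
  qed
  have "card (nbhd Y) \<le> card (insert x (insert v K))"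
    using nbhd_sub finite_K by (intro card_mono) auto
  also have "\<dots> \<le> card K + 2"
    using finite_K by (simp add: card_insert_if)
  also have "\<dots> \<le> card Y + 1"
    using deficient unfolding K_def by linarith
  finally show ?thesis
    unfolding blocking_set_def using Y(1) meets misses by blast
qed

lemma blocking_set_if_not_admissible:
  assumes v: "v \<in> U" and a: "a \<in> F" "v \<in> ends a"
    and g: "g \<in> F - {a}" and not_admissible: "\<not> admissible V (F - {a}) ends g"
  shows "\<exists>Y. blocking_set v a Y"
proof -
  have "g \<in> F"
    using g by blast
  then obtain x y where xy: "ends g = {x, y}" "x \<in> U" "y \<in> W"
    by (rule edge_endsE)
  have "\<not> (\<forall>S\<subseteq>W - {y}. card S \<le> card (\<Union>w\<in>S. {u \<in> U - {x}. \<exists>h\<in>F - {a}. ends h = {u, w}}))"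
    using admissible_if_hall[of g "F - {a}" x y] g xy not_admissible by blast
  then obtain Y where "Y \<subseteq> W - {y}"
    "card (\<Union>w\<in>Y. {u \<in> U - {x}. \<exists>h\<in>F - {a}. ends h = {u, w}}) < card Y"
    by (auto simp: not_le)
  then have "blocking_set v a Y"
    using xy(3) by (intro blocking_set_if_deficient[OF v a]) auto
  then show ?thesis
    by blast
qed

lemma nonremovable_edge_blocking_set:
  assumes v: "v \<in> U" and a: "a \<in> F" "v \<in> ends a"
    and nonremovable: "\<not> matching_covered V (F - {a}) ends"
  shows "\<exists>Y. blocking_set v a Y"
proof -
  obtain w where w: "ends a = {v, w}"
    using a v sides by (elim edge_endsE) auto
  have "card V \<ge> 2"
    using matching_covered unfolding matching_covered_def by blast
  then consider "\<not> connected_graph V (F - {a}) ends"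
    | g where "g \<in> F - {a}" "\<not> admissible V (F - {a}) ends g"
    using nonremovable unfolding matching_covered_def by blast
  then show ?thesis
    using blocking_set_if_disconnected[OF v a(1) w] blocking_set_if_not_admissible[OF v a]
    by cases blast+
qed

end

section \<open>Near-bipartite bricks\<close>

locale near_bipartite_brick =
  fixes V :: "'v set" and E :: "'e set" and ends :: "'e \<Rightarrow> 'v set"
    and e1 e2 :: 'e and U W :: "'v set"
  assumes graph: "is_graph V E ends"
    and brick: "brick V E ends"
    and e1: "e1 \<in> E" and e2: "e2 \<in> E" and ne: "e1 \<noteq> e2"
    and H_mc: "matching_covered V (E - {e1, e2}) ends"
    and H_bip: "is_bipartition V (E - {e1, e2}) ends U W"
    and e1U: "ends e1 \<subseteq> U" and e2W: "ends e2 \<subseteq> W"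
begin

sublocale H: bipartite_matching_covered V "E - {e1, e2}" ends U W
  using is_graph_subset[OF graph] H_mc H_bip by unfold_locales auto

lemma swap: "near_bipartite_brick V E ends e2 e1 W U"
  unfolding near_bipartite_brick_def
  using graph brick e1 e2 ne H_mc H_bip e1U e2W
  by (auto simp: insert_commute is_bipartition_def)

lemma e2_in_perfect_matching_if_e1:
  assumes M: "perfect_matching V E ends M" "e1 \<in> M"
  shows "e2 \<in> M"
proof (rule ccontr)
  assume "e2 \<notin> M"
  have "mate M ends z \<in> U - ends e1" if z: "z \<in> W" for z
  proof -
    have zV: "z \<in> V"
      using z H.sides by blast
    let ?e = "matching_edge M ends z"
    have e: "?e \<in> M" "ends ?e = {z, mate M ends z}"
      using matching_edge_covers(1)[OF graph M(1) zV] ends_matching_edge(1)[OF graph M(1) zV] .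
    have "?e \<noteq> e1"
      using e(2) e1U z H.sides by blast
    moreover have "?e \<in> E - {e2}"
      using e(1) M(1) \<open>e2 \<notin> M\<close> unfolding perfect_matching_def by blast
    ultimately have "mate M ends z \<in> U"
      using H.edge_end_in_U e(2) z by blast
    moreover have "mate M ends z \<notin> ends e1"
      using in_ends_if_mate_in_ends[OF graph M(1) zV M(2)] e1U z H.sides by blast
    ultimately show ?thesis
      by blast
  qed
  moreover have "W \<subseteq> V" "finite (U - ends e1)"
    using H.sides H.finite_sides by auto
  ultimately have "card W \<le> card (U - ends e1)"
    using card_le_if_mates_in[OF graph M(1)] by blast
  also have "\<dots> = card U - 2"
    using e1U e1 graph H.finite_sides unfolding is_graph_def
    by (simp add: card_Diff_subset finite_subset)
  finally show False
    using H.card_U_eq_card_W card_mono[OF H.finite_sides(1) e1U] e1 graph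
    unfolding is_graph_def by simp
qed

lemma type_I_edge_in_perfect_matching:
  assumes e: "nonremovable V E ends e" "removable V (E - {e1, e2}) ends e"
    and M: "perfect_matching V E ends M" "e1 \<in> M"
  shows "e \<in> M"
proof (rule ccontr)
  assume "e \<notin> M"
  then have M': "perfect_matching V (E - {e}) ends M"
    using M(1) unfolding perfect_matching_def by blast
  have H': "matching_covered V (E - {e1, e2} - {e}) ends"
    using e(2) unfolding removable_def by blast
  have "admissible V (E - {e}) ends f" if f: "f \<in> E - {e}" for f
  proof (cases "f \<in> {e1, e2}")
    case True
    then show ?thesis
      using M' M(2) e2_in_perfect_matching_if_e1[OF M] unfolding admissible_def by blast
  next
    case False
    then have "admissible V (E - {e1, e2} - {e}) ends f"
      using H' f unfolding matching_covered_def by blast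
    then show ?thesis
      unfolding admissible_def using perfect_matching_mono by blast
  qed
  moreover have "connected_graph V (E - {e}) ends" "card V \<ge> 2"
    using H' connected_graph_mono[of V "E - {e1, e2} - {e}" ends "E - {e}"]
    unfolding matching_covered_def by auto
  ultimately have "matching_covered V (E - {e}) ends"
    unfolding matching_covered_def by blast
  then show False
    using e(1) unfolding nonremovable_def by blast
qed

lemma card_type_I_edges_le_1:
  assumes "v \<in> V"
  shows "card {e \<in> E - {e1, e2}. v \<in> ends e \<and> nonremovable V E ends e
    \<and> removable V (E - {e1, e2}) ends e} \<le> 1"
proof -
  obtain M where M: "perfect_matching V E ends M" "e1 \<in> M"
    using brick_edge_admissible[OF graph brick e1] unfolding admissible_def by blast
  have "a = b" if "a \<in> M" "b \<in> M" "v \<in> ends a" "v \<in> ends b" for a b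
    using that M(1) assms unfolding perfect_matching_def by blast
  then show ?thesis
    using type_I_edge_in_perfect_matching[OF _ _ M] H.graph
    unfolding is_graph_def by (auto simp: card_le_Suc0_iff_eq)
qed

lemma tight_set_second_vertex:
  assumes Y: "Y \<subseteq> W" "Y \<noteq> {}" and v: "v \<in> H.nbhd Y"
    and tight: "card (H.nbhd Y) \<le> card Y + 1"
  obtains x where "x \<in> U" "x \<noteq> v" "card (H.nbhd Y - {v, x}) < card Y"
proof -
  have "card Y > 0"
    using Y H.finite_sides finite_subset by (metis card_gt_0_iff)
  show ?thesis
  proof (cases "H.nbhd Y - {v} = {}")
    case True
    obtain x where x: "x \<in> ends e1" "x \<noteq> v"
      using e1 graph unfolding is_graph_def by (metis card_2_iff insertCI)
    have "H.nbhd Y - {v, x} = {}"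
      using True by blast
    then have "card (H.nbhd Y - {v, x}) < card Y"
      using \<open>card Y > 0\<close> by (simp only: card.empty)
    moreover have "x \<in> U"
      using x(1) e1U by blast
    ultimately show ?thesis
      using that x(2) by blast
  next
    case False
    then obtain x where x: "x \<in> H.nbhd Y" "x \<noteq> v"
      by blast
    have "card (H.nbhd Y - {v, x}) = card (H.nbhd Y) - 2"
      using v x H.finite_nbhd by (subst card_Diff_subset) auto
    then have "card (H.nbhd Y - {v, x}) < card Y"
      using tight \<open>card Y > 0\<close> by linarith
    moreover have "x \<in> U"
      using x(1) unfolding H.nbhd_def by blast
    ultimately show ?thesis
      using that x(2) by blast
  qed
qed

text \<open>If e2 missed Y, a perfect matching of G - v - x would match Y into fewer
  than card Y vertices of its neighbourhood.\<close>

lemma tight_set_meets_e2: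
  assumes Y: "Y \<subseteq> W" "Y \<noteq> {}" and v: "v \<in> U" "v \<in> H.nbhd Y"
    and tight: "card (H.nbhd Y) \<le> card Y + 1"
  shows "ends e2 \<inter> Y \<noteq> {}"
proof
  assume misses: "ends e2 \<inter> Y = {}"
  obtain x where x: "x \<in> U" "x \<noteq> v" "card (H.nbhd Y - {v, x}) < card Y"
    using tight_set_second_vertex[OF Y v(2) tight] .
  have "v \<in> V" "x \<in> V"
    using v(1) x(1) H.sides by auto
  then obtain M where M: "perfect_matching (V - {v, x}) (del_edges E ends {v, x}) ends M"
    using brick x(2) unfolding brick_def by metis
  have graph': "is_graph (V - {v, x}) (del_edges E ends {v, x}) ends"
    using graph by (rule is_graph_del_edges)
  have "mate M ends z \<in> H.nbhd Y - {v, x}" if z: "z \<in> Y" for z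
  proof -
    have zV: "z \<in> V - {v, x}" "z \<in> W"
      using z Y(1) v(1) x(1) H.sides by auto
    let ?e = "matching_edge M ends z"
    have e: "?e \<in> del_edges E ends {v, x}" "ends ?e = {z, mate M ends z}"
      "mate M ends z \<in> V - {v, x}"
      using matching_edge_covers(1)[OF graph' M zV(1)] M ends_matching_edge[OF graph' M zV(1)]
      unfolding perfect_matching_def by auto
    then have "?e \<in> E - {e1, e2}"
      using zV(2) z misses e1U H.sides unfolding del_edges_def by blast
    then have "mate M ends z \<in> H.nbhd Y"
      using H.nbhdI e(2) z zV(2) by blast
    then show ?thesis
      using e(3) by simp
  qed
  moreover have "Y \<subseteq> V - {v, x}"
    using Y(1) v(1) x(1) H.sides by auto
  ultimately have "card Y \<le> card (H.nbhd Y - {v, x})"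
    using card_le_if_mates_in[OF graph' M _ finite_Diff[OF H.finite_nbhd]] by blast
  then show False
    using x(3) by linarith
qed

lemma card_type_II_edges_le_2_in_U:
  assumes v: "v \<in> U"
  shows "card {e \<in> E - {e1, e2}. v \<in> ends e \<and> nonremovable V (E - {e1, e2}) ends e} \<le> 2"
proof (rule ccontr)
  let ?T = "{e \<in> E - {e1, e2}. v \<in> ends e \<and> nonremovable V (E - {e1, e2}) ends e}"
  assume "\<not> card ?T \<le> 2"
  then have "3 \<le> card ?T"
    by simp
  then obtain T where "T \<subseteq> ?T" "card T = 3"
    by (rule obtain_subset_with_card_n)
  then obtain a b c where abc: "{a, b, c} \<subseteq> ?T" "a \<noteq> b" "a \<noteq> c" "b \<noteq> c"
    by (auto simp: card_3_iff)
  have "\<exists>Y. H.blocking_set v e Y" if "e \<in> ?T" for e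
    using that v H.nonremovable_edge_blocking_set unfolding nonremovable_def by blast
  then obtain Ya Yb Yc where Y: "H.blocking_set v a Ya" "H.blocking_set v b Yb" "H.blocking_set v c Yc"
    using abc(1) by (meson insert_subset)
  have meets: "ends e2 \<inter> Z \<noteq> {}" if "e \<in> ?T" "H.blocking_set v e Z" for e Z
    using that v H.blocking_set_tight[OF that(2) _ _ v]
    by (intro tight_set_meets_e2) (auto simp: nonremovable_def)
  have edges: "a \<in> E - {e1, e2}" "b \<in> E - {e1, e2}" "c \<in> E - {e1, e2}"
    and at_v: "v \<in> ends a" "v \<in> ends b" "v \<in> ends c"
    using abc(1) by auto
  have "Ya \<inter> Yb = {}"
    using H.blocking_sets_disjoint[OF v at_v edges] abc(2-4) Y(1,2) by blast
  moreover have "Ya \<inter> Yc = {}"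
    using H.blocking_sets_disjoint[OF v at_v(1,3,2) edges(1,3,2)] abc(2-4) Y(1,3) by blast
  moreover have "Yb \<inter> Yc = {}"
    using H.blocking_sets_disjoint[OF v at_v(2,3,1) edges(2,3,1)] abc(2-4) Y(2,3) by blast
  moreover have "ends e2 \<inter> Ya \<noteq> {}" "ends e2 \<inter> Yb \<noteq> {}" "ends e2 \<inter> Yc \<noteq> {}"
    using meets[OF _ Y(1)] meets[OF _ Y(2)] meets[OF _ Y(3)] abc(1) by auto
  moreover obtain p q where "ends e2 = {p, q}"
    using graph e2 by (rule is_graph_edgeE)
  ultimately show False
    by auto
qed

lemma card_type_II_edges_le_2:
  assumes "v \<in> V"
  shows "card {e \<in> E - {e1, e2}. v \<in> ends e \<and> nonremovable V E ends e
    \<and> nonremovable V (E - {e1, e2}) ends e} \<le> 2"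
proof -
  let ?T = "{e \<in> E - {e1, e2}. v \<in> ends e \<and> nonremovable V (E - {e1, e2}) ends e}"
  have "card ?T \<le> 2"
  proof (cases "v \<in> U")
    case False
    then have "v \<in> W"
      using assms H.sides by blast
    then show ?thesis
      using near_bipartite_brick.card_type_II_edges_le_2_in_U[OF swap]
      by (simp add: insert_commute)
  qed (rule card_type_II_edges_le_2_in_U)
  moreover have "finite ?T"
    using graph unfolding is_graph_def by simp
  then have "card {e \<in> E - {e1, e2}. v \<in> ends e \<and> nonremovable V E ends e
    \<and> nonremovable V (E - {e1, e2}) ends e} \<le> card ?T"
    by (rule card_mono) auto
  ultimately show ?thesis
    by linarith
qed

end

theorem mainTheorem7:
  fixes V :: "'v set" and E :: "'e set" and ends :: "'e \<Rightarrow> 'v set"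
    and e1 e2 :: 'e and U W :: "'v set"
  assumes graph: "is_graph V E ends"
    and brick: "brick V E ends"
    and e1: "e1 \<in> E" and e2: "e2 \<in> E" and ne: "e1 \<noteq> e2"
    and H_mc: "matching_covered V (E - {e1, e2}) ends"
    and H_bip: "is_bipartition V (E - {e1, e2}) ends U W"
    and e1U: "ends e1 \<subseteq> U" and e2W: "ends e2 \<subseteq> W"
  shows "\<forall>v\<in>V.
     card {e \<in> E - {e1, e2}. v \<in> ends e \<and> nonremovable V E ends e
             \<and> removable V (E - {e1, e2}) ends e} \<le> 1 \<and>
     card {e \<in> E - {e1, e2}. v \<in> ends e \<and> nonremovable V E ends e
             \<and> nonremovable V (E - {e1, e2}) ends e} \<le> 2"
proof -
  interpret near_bipartite_brick V E ends e1 e2 U W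
    using assms by unfold_locales
  show ?thesis
    using card_type_I_edges_le_1 card_type_II_edges_le_2 by blast
qed

end
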